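(* Let $Y$ be a set, $\Lambda$ an index set, and for each $\ell\in\Lambda$ let $\rho_\ell:Y\to Y_\ell$ be a surjective map onto a finite set $Y_\ell$. Let $(X,\mu)$ be a measure space with $\mu(X)<\infty$ and $F:X\to Y$, $x\mapsto F_x$, a map such that each set $\{x\in X\mid \rho_\ell(F_x)=y\}$ is measurable. For each $\ell\in\Lambda$ let $\nu_\ell$ be a probability density on $Y_\ell$ with $\nu_\ell(y)>0$ for all $y$, and let $\mathcal{B}_\ell$ be an orthonormal basis of the space $L^2(Y_\ell)$ of functions on $Y_\ell$ with inner product $\langle f,g\rangle=\sum_y\nu_\ell(y)f(y)\overline{g(y)}$, such that $\mathcal{B}_\ell$ contains the constant function $1$; put $\mathcal{B}_\ell^*=\mathcal{B}_\ell\setminus\{1\}$. For a finite subset $m\subset\Lambda$ let $Y_m=\prod_{\ell\in m}Y_\ell$, $\rho_m=(\rho_\ell)_{\ell\in m}:Y\to Y_m$, and $\mathcal{B}_m^*$ the set of functions $(y_\ell)\mapsto\prod_{\ell\in m}\varphi_\ell(y_\ell)$ with $\varphi_\ell\in\mathcal{B}_\ell^*$ (for $m=\emptyset$, $Y_m$ is a point and $\mathcal{B}_m^*=\{1\}$). Let $\mathcal{L}^*\subset\Lambda$ be finite, let $\mathcal{L}$ be a finite set of finite subsets of $\Lambda$ such that every element of every $m\in\mathcal{L}$ lies in $\mathcal{L}^*$ and $\{\ell\}\in\mathcal{L}$ for every $\ell\in\mathcal{L}^*$, and let $\Delta$ be the smallest non-negative real number such that $$\sum_{m\in\mathcal{L}}\sum_{\varphi\in\mathcal{B}_m^*}\Big|\int_X\alpha(x)\varphi(\rho_m(F_x))\,d\mu(x)\Big|^2\leq\Delta\int_X|\alpha(x)|^2\,d\mu(x)$$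 for every square-integrable $\alpha:X\to\mathbf{C}$. Then for arbitrary subsets $\Omega_\ell\subset Y_\ell$ ($\ell\in\mathcal{L}^*$), the set $S(X,\Omega;\mathcal{L}^* )=\{x\in X\mid \rho_\ell(F_x)\notin\Omega_\ell \text{ for all } \ell\in\mathcal{L}^*\}$ satisfies $$\mu(S(X,\Omega;\mathcal{L}^* ))\leq\Delta H^{-1},\qquad H=\sum_{m\in\mathcal{L}}\prod_{\ell\in m}\frac{\nu_\ell(\Omega_\ell)}{1-\nu_\ell(\Omega_\ell)},$$ where $\nu_\ell(\Omega_\ell)=\sum_{y\in\Omega_\ell}\nu_\ell(y)$. *)

theory Defs
  imports "HOL-Analysis.Analysis"
begin

definition nu_inner :: "('z \<Rightarrow> real) \<Rightarrow> 'z set \<Rightarrow> ('z \<Rightarrow> complex) \<Rightarrow> ('z \<Rightarrow> complex) \<Rightarrow> complex" where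
  "nu_inner \<nu> A f g = (\<Sum>y\<in>A. complex_of_real (\<nu> y) * f y * cnj (g y))"

definition nu_orthonormal_basis :: "('z \<Rightarrow> real) \<Rightarrow> 'z set \<Rightarrow> ('z \<Rightarrow> complex) set \<Rightarrow> bool" where
  "nu_orthonormal_basis \<nu> A B \<longleftrightarrow>
     finite B \<and>
     (\<forall>\<phi>\<in>B. \<forall>\<psi>\<in>B. nu_inner \<nu> A \<phi> \<psi> = (if \<phi> = \<psi> then 1 else 0)) \<and>
     (\<forall>f :: 'z \<Rightarrow> complex. \<exists>c. \<forall>y\<in>A. f y = (\<Sum>\<phi>\<in>B. c \<phi> * \<phi> y))"

definition rho_m :: "('l \<Rightarrow> 'y \<Rightarrow> 'z) \<Rightarrow> 'l set \<Rightarrow> 'y \<Rightarrow> ('l \<Rightarrow> 'z)" where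
  "rho_m \<rho> m u = restrict (\<lambda>l. \<rho> l u) m"

definition Bstar_m :: "('l \<Rightarrow> ('z \<Rightarrow> complex) set) \<Rightarrow> 'l set \<Rightarrow> (('l \<Rightarrow> 'z) \<Rightarrow> complex) set" where
  "Bstar_m B m = {(\<lambda>y. \<Prod>l\<in>m. \<phi> l (y l)) | \<phi>. \<forall>l\<in>m. \<phi> l \<in> B l - {(\<lambda>_. 1)}}"

definition square_integrable :: "'x measure \<Rightarrow> ('x \<Rightarrow> complex) \<Rightarrow> bool" where
  "square_integrable M \<alpha> \<longleftrightarrow> \<alpha> \<in> borel_measurable M \<and> integrable M (\<lambda>x. (cmod (\<alpha> x))\<^sup>2)"

definition nu_set :: "('z \<Rightarrow> real) \<Rightarrow> 'z set \<Rightarrow> real" where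
  "nu_set \<nu> \<Omega> = (\<Sum>y\<in>\<Omega>. \<nu> y)"

end

theory Submission
  imports Defs
begin

(*
  Let S be the sifted set and p l = \<nu> l (\<Omega> l). The centred indicator f l of \<Omega> l is
  orthogonal to the constants, hence a combination of B l - {1}, with squared norm
  p l * (1 - p l), and f l (\<rho> l (F x)) = - p l for every x in S. Expanding the product of the
  f l over l in m in the product basis B*m and integrating against the indicator of S writes
  \<mu>(S) * \<Prod>l\<in>m. p l (up to sign) as a combination of the integrals in the large sieve sum,
  with coefficient vector of squared norm \<Prod>l\<in>m. p l * (1 - p l). Cauchy-Schwarz gives
  \<mu>(S)^2 * (\<Prod>l\<in>m. p l / (1 - p l)) \<le> (m-th term of the sum); summing over m in L and
  applying the defining inequality of \<Delta> to the indicator of S yields \<mu>(S)^2 * H \<le> \<Delta> * \<mu>(S).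
*)

lemma nu_orthonormal_basis_expansion:
  assumes onb: "nu_orthonormal_basis \<nu> Y B" and y: "y \<in> Y"
  shows "g y = (\<Sum>\<psi>\<in>B. nu_inner \<nu> Y g \<psi> * \<psi> y)"
proof -
  from onb have finB: "finite B"
    and orth: "\<And>\<phi> \<psi>. \<phi> \<in> B \<Longrightarrow> \<psi> \<in> B \<Longrightarrow> nu_inner \<nu> Y \<phi> \<psi> = (if \<phi> = \<psi> then 1 else 0)"
    and "\<exists>c. \<forall>y\<in>Y. g y = (\<Sum>\<phi>\<in>B. c \<phi> * \<phi> y)"
    unfolding nu_orthonormal_basis_def by blast+
  then obtain c where c: "\<And>y. y \<in> Y \<Longrightarrow> g y = (\<Sum>\<phi>\<in>B. c \<phi> * \<phi> y)" by blast
  have "nu_inner \<nu> Y g \<psi> = c \<psi>" if \<psi>: "\<psi> \<in> B" for \<psi>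
  proof -
    have "nu_inner \<nu> Y g \<psi> = (\<Sum>y\<in>Y. \<Sum>\<phi>\<in>B. c \<phi> * (complex_of_real (\<nu> y) * \<phi> y * cnj (\<psi> y)))"
      unfolding nu_inner_def
      by (intro sum.cong refl) (simp add: c sum_distrib_left sum_distrib_right mult_ac)
    also have "\<dots> = (\<Sum>\<phi>\<in>B. c \<phi> * nu_inner \<nu> Y \<phi> \<psi>)"
      unfolding nu_inner_def by (subst sum.swap) (simp add: sum_distrib_left)
    also have "\<dots> = (\<Sum>\<phi>\<in>B. if \<phi> = \<psi> then c \<phi> else 0)"
      using \<psi> by (intro sum.cong) (auto simp: orth)
    also have "\<dots> = c \<psi>"
      using finB \<psi> by simp
    finally show ?thesis .
  qed
  then show ?thesis using c[OF y] by simp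
qed

lemma nu_orthonormal_basis_parseval:
  assumes "nu_orthonormal_basis \<nu> Y B"
  shows "nu_inner \<nu> Y g g = complex_of_real (\<Sum>\<psi>\<in>B. (cmod (nu_inner \<nu> Y g \<psi>))\<^sup>2)"
proof -
  define c where "c \<psi> = nu_inner \<nu> Y g \<psi>" for \<psi>
  have "nu_inner \<nu> Y g g = (\<Sum>y\<in>Y. complex_of_real (\<nu> y) * g y * cnj (\<Sum>\<psi>\<in>B. c \<psi> * \<psi> y))"
    unfolding nu_inner_def[of \<nu> Y g g] c_def
    using nu_orthonormal_basis_expansion[OF assms, of _ g] by (intro sum.cong refl) simp
  also have "\<dots> = (\<Sum>y\<in>Y. \<Sum>\<psi>\<in>B. cnj (c \<psi>) * (complex_of_real (\<nu> y) * g y * cnj (\<psi> y)))"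
    by (simp add: sum_distrib_left mult_ac)
  also have "\<dots> = (\<Sum>\<psi>\<in>B. cnj (c \<psi>) * c \<psi>)"
    unfolding c_def nu_inner_def by (subst sum.swap) (simp add: sum_distrib_left)
  also have "\<dots> = complex_of_real (\<Sum>\<psi>\<in>B. (cmod (c \<psi>))\<^sup>2)"
    unfolding of_real_sum by (intro sum.cong refl, subst complex_norm_square) (simp add: mult.commute)
  finally show ?thesis unfolding c_def .
qed

lemma
  assumes onb: "nu_orthonormal_basis \<nu> Y B" and one: "(\<lambda>_. 1) \<in> B"
    and orth: "nu_inner \<nu> Y g (\<lambda>_. 1) = 0"
  shows nu_orthonormal_basis_expansion_orthogonal_one:
      "y \<in> Y \<Longrightarrow> g y = (\<Sum>\<psi>\<in>B - {\<lambda>_. 1}. nu_inner \<nu> Y g \<psi> * \<psi> y)"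
    and nu_orthonormal_basis_parseval_orthogonal_one:
      "nu_inner \<nu> Y g g = complex_of_real (\<Sum>\<psi>\<in>B - {\<lambda>_. 1}. (cmod (nu_inner \<nu> Y g \<psi>))\<^sup>2)"
proof -
  have finB: "finite B" using onb unfolding nu_orthonormal_basis_def by blast
  show "y \<in> Y \<Longrightarrow> g y = (\<Sum>\<psi>\<in>B - {\<lambda>_. 1}. nu_inner \<nu> Y g \<psi> * \<psi> y)"
    using nu_orthonormal_basis_expansion[OF onb, of y g]
      sum.remove[OF finB one, of "\<lambda>\<psi>. nu_inner \<nu> Y g \<psi> * \<psi> y"] orth by simp
  show "nu_inner \<nu> Y g g = complex_of_real (\<Sum>\<psi>\<in>B - {\<lambda>_. 1}. (cmod (nu_inner \<nu> Y g \<psi>))\<^sup>2)"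
  proof -
    have "(\<Sum>\<psi>\<in>B. (cmod (nu_inner \<nu> Y g \<psi>))\<^sup>2) = (\<Sum>\<psi>\<in>B - {\<lambda>_. 1}. (cmod (nu_inner \<nu> Y g \<psi>))\<^sup>2)"
      using sum.remove[OF finB one, of "\<lambda>\<psi>. (cmod (nu_inner \<nu> Y g \<psi>))\<^sup>2"] orth by simp
    then show ?thesis using nu_orthonormal_basis_parseval[OF onb, of g] by simp
  qed
qed

definition centered_indicator :: "('z \<Rightarrow> real) \<Rightarrow> 'z set \<Rightarrow> 'z \<Rightarrow> complex" where
  "centered_indicator \<nu> \<Omega> y = complex_of_real (indicator \<Omega> y - nu_set \<nu> \<Omega>)"

lemma sum_mult_indicator_eq_nu_set:
  assumes "finite Y" "\<Omega> \<subseteq> Y"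
  shows "(\<Sum>y\<in>Y. \<nu> y * indicator \<Omega> y) = nu_set \<nu> \<Omega>"
proof -
  have "(\<Sum>y\<in>Y. \<nu> y * indicator \<Omega> y) = (\<Sum>y\<in>Y. if y \<in> \<Omega> then \<nu> y else 0)"
    by (intro sum.cong) auto
  then show ?thesis
    using sum.inter_restrict[OF assms(1), of \<nu> \<Omega>] assms(2) by (simp add: nu_set_def Int_absorb1)
qed

lemma
  assumes "finite Y" "\<Omega> \<subseteq> Y" "(\<Sum>y\<in>Y. \<nu> y) = 1"
  shows nu_inner_centered_indicator_one: "nu_inner \<nu> Y (centered_indicator \<nu> \<Omega>) (\<lambda>_. 1) = 0"
    and nu_inner_centered_indicator_self:
      "nu_inner \<nu> Y (centered_indicator \<nu> \<Omega>) (centered_indicator \<nu> \<Omega>)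
         = complex_of_real (nu_set \<nu> \<Omega> * (1 - nu_set \<nu> \<Omega>))"
proof -
  let ?p = "nu_set \<nu> \<Omega>"
  have real_valued: "nu_inner \<nu> Y (centered_indicator \<nu> \<Omega>) (\<lambda>y. complex_of_real (h y))
      = complex_of_real (\<Sum>y\<in>Y. \<nu> y * (indicator \<Omega> y - ?p) * h y)" for h
    unfolding nu_inner_def centered_indicator_def of_real_sum by simp
  have "(\<Sum>y\<in>Y. \<nu> y * (indicator \<Omega> y - ?p) * 1) = ?p - ?p * 1"
    using sum_mult_indicator_eq_nu_set[OF assms(1,2)]
    by (simp add: right_diff_distrib sum_subtractf sum_distrib_right[symmetric] assms(3))
  then show "nu_inner \<nu> Y (centered_indicator \<nu> \<Omega>) (\<lambda>_. 1) = 0"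
    using real_valued[of "\<lambda>_. 1"] by simp
  have sq: "(indicator \<Omega> y - ?p) * (indicator \<Omega> y - ?p) = (1 - 2 * ?p) * indicator \<Omega> y + ?p\<^sup>2"
    for y
    by (simp add: indicator_def power2_eq_square algebra_simps)
  have "(\<Sum>y\<in>Y. \<nu> y * (indicator \<Omega> y - ?p) * (indicator \<Omega> y - ?p))
      = (1 - 2 * ?p) * (\<Sum>y\<in>Y. \<nu> y * indicator \<Omega> y) + ?p\<^sup>2 * (\<Sum>y\<in>Y. \<nu> y)"
    by (simp add: mult.assoc sq distrib_left sum.distrib sum_distrib_left sum_distrib_right mult_ac)
  also have "\<dots> = (1 - 2 * ?p) * ?p + ?p\<^sup>2 * 1"
    by (simp add: sum_mult_indicator_eq_nu_set[OF assms(1,2)] assms(3))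
  finally have norm_sq: "(\<Sum>y\<in>Y. \<nu> y * (indicator \<Omega> y - ?p) * (indicator \<Omega> y - ?p))
      = ?p * (1 - ?p)"
    by (simp add: power2_eq_square algebra_simps)
  have "centered_indicator \<nu> \<Omega> = (\<lambda>y. complex_of_real (indicator \<Omega> y - ?p))"
    by (simp add: fun_eq_iff centered_indicator_def)
  then show "nu_inner \<nu> Y (centered_indicator \<nu> \<Omega>) (centered_indicator \<nu> \<Omega>)
      = complex_of_real (?p * (1 - ?p))"
    using real_valued[of "\<lambda>y. indicator \<Omega> y - ?p"] norm_sq by metis
qed

lemma nu_set_nonneg_less_one:
  assumes "finite Y" "\<Omega> \<subseteq> Y" "y \<in> Y - \<Omega>" "\<And>y. y \<in> Y \<Longrightarrow> 0 < \<nu> y" "(\<Sum>y\<in>Y. \<nu> y) = 1"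
  shows "0 \<le> nu_set \<nu> \<Omega> \<and> nu_set \<nu> \<Omega> < 1"
proof
  show "0 \<le> nu_set \<nu> \<Omega>"
    unfolding nu_set_def using assms(2,4) by (auto intro: sum_nonneg less_imp_le)
  have "sum \<nu> \<Omega> < sum \<nu> Y"
    using assms(1-4) by (intro sum_strict_mono2) (auto intro: less_imp_le)
  then show "nu_set \<nu> \<Omega> < 1" unfolding nu_set_def assms(5) .
qed

lemma nu_inner_prod_PiE:
  assumes "finite m" "\<And>l. l \<in> m \<Longrightarrow> finite (Y l)"
  shows "(\<Prod>l\<in>m. nu_inner (\<nu> l) (Y l) (t l) (s l))
     = (\<Sum>y\<in>PiE m Y. complex_of_real (\<Prod>l\<in>m. \<nu> l (y l))
                         * (\<Prod>l\<in>m. t l (y l)) * cnj (\<Prod>l\<in>m. s l (y l)))"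
proof -
  have "(\<Prod>l\<in>m. nu_inner (\<nu> l) (Y l) (t l) (s l)) =
     (\<Sum>y\<in>PiE m Y. \<Prod>l\<in>m. complex_of_real (\<nu> l (y l)) * t l (y l) * cnj (s l (y l)))"
    unfolding nu_inner_def by (rule prod_sum_PiE[OF assms])
  then show ?thesis by (simp add: prod.distrib cnj_prod)
qed

lemma inj_on_prod_PiE_orthonormal_basis:
  assumes fin: "finite m" and finY: "\<And>l. l \<in> m \<Longrightarrow> finite (Y l)"
    and onb: "\<And>l. l \<in> m \<Longrightarrow> nu_orthonormal_basis (\<nu> l) (Y l) (B l)"
  shows "inj_on (\<lambda>t y. \<Prod>l\<in>m. t l (y l)) (PiE m B)"
proof
  fix t s assume t: "t \<in> PiE m B" and s: "s \<in> PiE m B"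
    and eq: "(\<lambda>y. \<Prod>l\<in>m. t l (y l)) = (\<lambda>y. \<Prod>l\<in>m. s l (y l))"
  have orth: "nu_inner (\<nu> l) (Y l) (t l) (u l) = (if t l = u l then 1 else 0)"
    if "l \<in> m" "u \<in> PiE m B" for l u
    using onb[OF that(1)] PiE_mem[OF t that(1)] PiE_mem[OF that(2,1)]
    unfolding nu_orthonormal_basis_def by blast
  have "(\<Prod>l\<in>m. s l (y l)) = (\<Prod>l\<in>m. t l (y l))" for y
    using fun_cong[OF eq, of y] by simp
  then have "(\<Prod>l\<in>m. nu_inner (\<nu> l) (Y l) (t l) (s l)) = (\<Prod>l\<in>m. nu_inner (\<nu> l) (Y l) (t l) (t l))"
    by (simp only: nu_inner_prod_PiE[OF fin finY])
  also have "\<dots> = 1"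
    using t by (simp add: orth)
  finally have "(\<Prod>l\<in>m. nu_inner (\<nu> l) (Y l) (t l) (s l)) \<noteq> 0" by simp
  then have "\<forall>l\<in>m. t l = s l" using fin orth[OF _ s] by (metis prod_zero_iff)
  then show "t = s" using t s by (metis PiE_ext)
qed

lemma Bstar_m_eq_image:
  "Bstar_m B m = (\<lambda>t y. \<Prod>l\<in>m. t l (y l)) ` PiE m (\<lambda>l. B l - {\<lambda>_. 1})"
proof
  show "Bstar_m B m \<subseteq> (\<lambda>t y. \<Prod>l\<in>m. t l (y l)) ` PiE m (\<lambda>l. B l - {\<lambda>_. 1})"
  proof
    fix g assume "g \<in> Bstar_m B m"
    then obtain \<phi> where g: "g = (\<lambda>y. \<Prod>l\<in>m. \<phi> l (y l))" and \<phi>: "\<forall>l\<in>m. \<phi> l \<in> B l - {\<lambda>_. 1}"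
      unfolding Bstar_m_def by blast
    have "g = (\<lambda>y. \<Prod>l\<in>m. restrict \<phi> m l (y l))" unfolding g by (auto intro!: prod.cong)
    moreover have "restrict \<phi> m \<in> PiE m (\<lambda>l. B l - {\<lambda>_. 1})" using \<phi> by auto
    ultimately show "g \<in> (\<lambda>t y. \<Prod>l\<in>m. t l (y l)) ` PiE m (\<lambda>l. B l - {\<lambda>_. 1})" by blast
  qed
  show "(\<lambda>t y. \<Prod>l\<in>m. t l (y l)) ` PiE m (\<lambda>l. B l - {\<lambda>_. 1}) \<subseteq> Bstar_m B m"
    unfolding Bstar_m_def by (auto simp: PiE_def Pi_def)
qed

lemma sum_Bstar_m_eq_sum_PiE:
  assumes "finite m" "\<And>l. l \<in> m \<Longrightarrow> finite (Y l)"
    and "\<And>l. l \<in> m \<Longrightarrow> nu_orthonormal_basis (\<nu> l) (Y l) (B l)"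
  shows "(\<Sum>\<phi>\<in>Bstar_m B m. h \<phi>) = (\<Sum>t\<in>PiE m (\<lambda>l. B l - {\<lambda>_. 1}). h (\<lambda>y. \<Prod>l\<in>m. t l (y l)))"
proof -
  have "inj_on (\<lambda>t y. \<Prod>l\<in>m. t l (y l)) (PiE m (\<lambda>l. B l - {\<lambda>_. 1}))"
    by (rule inj_on_subset[OF inj_on_prod_PiE_orthonormal_basis[OF assms]]) (auto simp: PiE_iff)
  then show ?thesis unfolding Bstar_m_eq_image by (simp add: sum.reindex)
qed

lemma prod_expansion_PiE:
  fixes c :: "'l \<Rightarrow> ('z \<Rightarrow> 'a) \<Rightarrow> 'a::comm_semiring_1"
  assumes "finite m" "\<And>l. l \<in> m \<Longrightarrow> finite (A l)"
    and "\<And>l. l \<in> m \<Longrightarrow> g l (y l) = (\<Sum>\<psi>\<in>A l. c l \<psi> * \<psi> (y l))"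
  shows "(\<Prod>l\<in>m. g l (y l)) = (\<Sum>t\<in>PiE m A. (\<Prod>l\<in>m. c l (t l)) * (\<Prod>l\<in>m. t l (y l)))"
proof -
  have "(\<Prod>l\<in>m. g l (y l)) = (\<Prod>l\<in>m. \<Sum>\<psi>\<in>A l. c l \<psi> * \<psi> (y l))"
    using assms(3) by (rule prod.cong[OF refl])
  also have "\<dots> = (\<Sum>t\<in>PiE m A. \<Prod>l\<in>m. c l (t l) * t l (y l))"
    by (rule prod_sum_PiE[OF assms(1,2), where f = "\<lambda>l \<psi>. c l \<psi> * \<psi> (y l)"])
  finally show ?thesis by (simp add: prod.distrib)
qed

lemma sum_PiE_norm_prod_squared:
  fixes c :: "'l \<Rightarrow> 'b \<Rightarrow> 'a::real_normed_field"
  assumes "finite m" "\<And>l. l \<in> m \<Longrightarrow> finite (A l)"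
  shows "(\<Sum>t\<in>PiE m A. (norm (\<Prod>l\<in>m. c l (t l)))\<^sup>2) = (\<Prod>l\<in>m. \<Sum>\<psi>\<in>A l. (norm (c l \<psi>))\<^sup>2)"
  by (simp add: prod_sum_PiE[OF assms, where f = "\<lambda>l \<psi>. (norm (c l \<psi>))\<^sup>2"] prod_norm[symmetric]
      prod_power_distrib)

lemma prod_nu_orthonormal_basis_expansion:
  fixes g :: "'l \<Rightarrow> 'z \<Rightarrow> complex"
  assumes m: "finite m"
    and onb: "\<And>l. l \<in> m \<Longrightarrow> nu_orthonormal_basis (\<nu> l) (Y l) (B l)"
    and one: "\<And>l. l \<in> m \<Longrightarrow> (\<lambda>_. 1) \<in> B l"
    and orth: "\<And>l. l \<in> m \<Longrightarrow> nu_inner (\<nu> l) (Y l) (g l) (\<lambda>_. 1) = 0"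
    and y: "y \<in> PiE m Y"
  shows "(\<Prod>l\<in>m. g l (y l))
    = (\<Sum>t\<in>PiE m (\<lambda>l. B l - {\<lambda>_. 1}).
         (\<Prod>l\<in>m. nu_inner (\<nu> l) (Y l) (g l) (t l)) * (\<Prod>l\<in>m. t l (y l)))"
proof (rule prod_expansion_PiE[OF m])
  show "finite (B l - {\<lambda>_. 1})" if "l \<in> m" for l
    using onb[OF that] unfolding nu_orthonormal_basis_def by blast
  show "g l (y l) = (\<Sum>\<psi>\<in>B l - {\<lambda>_. 1}. nu_inner (\<nu> l) (Y l) (g l) \<psi> * \<psi> (y l))" if "l \<in> m" for l
    using that y by (intro nu_orthonormal_basis_expansion_orthogonal_one[OF onb one orth]) auto
qed

lemma prod_nu_orthonormal_basis_parseval: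
  fixes g :: "'l \<Rightarrow> 'z \<Rightarrow> complex"
  assumes m: "finite m"
    and onb: "\<And>l. l \<in> m \<Longrightarrow> nu_orthonormal_basis (\<nu> l) (Y l) (B l)"
    and one: "\<And>l. l \<in> m \<Longrightarrow> (\<lambda>_. 1) \<in> B l"
    and orth: "\<And>l. l \<in> m \<Longrightarrow> nu_inner (\<nu> l) (Y l) (g l) (\<lambda>_. 1) = 0"
  shows "(\<Sum>t\<in>PiE m (\<lambda>l. B l - {\<lambda>_. 1}). (cmod (\<Prod>l\<in>m. nu_inner (\<nu> l) (Y l) (g l) (t l)))\<^sup>2)
    = (\<Prod>l\<in>m. Re (nu_inner (\<nu> l) (Y l) (g l) (g l)))"
proof -
  have "finite (B l - {\<lambda>_. 1})" if "l \<in> m" for l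
    using onb[OF that] unfolding nu_orthonormal_basis_def by blast
  then have "(\<Sum>t\<in>PiE m (\<lambda>l. B l - {\<lambda>_. 1}). (cmod (\<Prod>l\<in>m. nu_inner (\<nu> l) (Y l) (g l) (t l)))\<^sup>2)
      = (\<Prod>l\<in>m. \<Sum>\<psi>\<in>B l - {\<lambda>_. 1}. (cmod (nu_inner (\<nu> l) (Y l) (g l) \<psi>))\<^sup>2)"
    using m by (intro sum_PiE_norm_prod_squared)
  also have "\<dots> = (\<Prod>l\<in>m. Re (nu_inner (\<nu> l) (Y l) (g l) (g l)))"
    by (intro prod.cong refl) (simp add: nu_orthonormal_basis_parseval_orthogonal_one[OF onb one orth])
  finally show ?thesis .
qed

lemma norm_sum_mult_squared_le:
  fixes a b :: "'i \<Rightarrow> 'a::real_normed_div_algebra"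
  shows "(norm (\<Sum>i\<in>I. a i * b i))\<^sup>2 \<le> (\<Sum>i\<in>I. (norm (a i))\<^sup>2) * (\<Sum>i\<in>I. (norm (b i))\<^sup>2)"
proof -
  have "norm (\<Sum>i\<in>I. a i * b i) \<le> (\<Sum>i\<in>I. norm (a i) * norm (b i))"
    using norm_sum[of "\<lambda>i. a i * b i" I] by (simp add: norm_mult)
  then have "(norm (\<Sum>i\<in>I. a i * b i))\<^sup>2 \<le> (\<Sum>i\<in>I. norm (a i) * norm (b i))\<^sup>2"
    by (simp add: power_mono)
  also have "\<dots> \<le> (\<Sum>i\<in>I. (norm (a i))\<^sup>2) * (\<Sum>i\<in>I. (norm (b i))\<^sup>2)"
    by (rule Cauchy_Schwarz_ineq_sum)
  finally show ?thesis .
qed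

lemma measurable_rho_m:
  assumes "finite m" "\<And>l. l \<in> m \<Longrightarrow> finite (Y l)"
    and "\<And>l u. l \<in> m \<Longrightarrow> \<rho> l u \<in> Y l"
    and "\<And>l z. l \<in> m \<Longrightarrow> {x \<in> space M. \<rho> l (F x) = z} \<in> sets M"
  shows "(\<lambda>x. rho_m \<rho> m (F x)) \<in> measurable M (count_space (PiE m Y))"
proof -
  have "(\<lambda>x. rho_m \<rho> m (F x)) -` {a} \<inter> space M \<in> sets M" if a: "a \<in> PiE m Y" for a
  proof -
    have "(\<lambda>x. rho_m \<rho> m (F x)) -` {a} \<inter> space M = {x \<in> space M. \<forall>l\<in>m. \<rho> l (F x) = a l}"
      using a by (auto simp: rho_m_def PiE_iff fun_eq_iff extensional_def)
    also have "\<dots> \<in> sets M"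
      using assms(1,4) by (intro sets.sets_Collect_finite_All) auto
    finally show ?thesis .
  qed
  moreover have "(\<lambda>x. rho_m \<rho> m (F x)) \<in> space M \<rightarrow> PiE m Y"
    using assms(3) by (auto simp: rho_m_def)
  moreover have "finite (PiE m Y)" using assms(1,2) by (intro finite_PiE)
  ultimately show ?thesis by (simp add: measurable_count_space_eq2)
qed

lemma integrable_indicator_mult_finite_range:
  fixes g :: "'a \<Rightarrow> complex"
  assumes "finite_measure M" "finite A" "h \<in> measurable M (count_space A)" "S \<in> sets M"
  shows "integrable M (\<lambda>x. indicator S x * g (h x))"
proof -
  interpret finite_measure M by fact
  have "(\<lambda>x. indicator S x * g (h x)) \<in> borel_measurable M"
    using measurable_compose[OF assms(3), of g] assms(4) by (intro borel_measurable_times) auto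
  moreover have "AE x in M. norm (indicator S x * g (h x)) \<le> (\<Sum>a\<in>A. norm (g a))"
  proof (rule AE_I2)
    fix x assume "x \<in> space M"
    then have "h x \<in> A" using measurable_space[OF assms(3)] by simp
    then have "norm (g (h x)) \<le> (\<Sum>a\<in>A. norm (g a))"
      using assms(2) by (intro member_le_sum) auto
    then show "norm (indicator S x * g (h x)) \<le> (\<Sum>a\<in>A. norm (g a))"
      by (simp add: indicator_def norm_mult sum_nonneg)
  qed
  ultimately show ?thesis by (intro integrable_const_bound)
qed

lemma
  assumes "finite_measure M" "S \<in> sets M"
  shows square_integrable_indicator: "square_integrable M (indicator S)"
    and integral_norm_indicator_squared: "(LINT x|M. (cmod (indicator S x))\<^sup>2) = measure M S"
proof -
  have sq: "(\<lambda>x. (cmod (indicator S x))\<^sup>2) = indicator S"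
    by (auto simp: indicator_def)
  show "square_integrable M (indicator S)"
    unfolding square_integrable_def sq
    using assms finite_measure.emeasure_finite[OF assms(1)] by (auto simp: top.not_eq_extremum)
  show "(LINT x|M. (cmod (indicator S x))\<^sup>2) = measure M S"
    unfolding sq using sets.sets_into_space[OF assms(2)] by (simp add: Int_absorb2)
qed

lemma integral_indicator_complex:
  assumes "S \<in> sets M"
  shows "(LINT x|M. indicator S x :: complex) = complex_of_real (measure M S)"
proof -
  have "(LINT x|M. indicator S x :: complex) = (LINT x|M. complex_of_real (indicator S x))"
    by (intro Bochner_Integration.integral_cong) (auto simp: indicator_def)
  also have "\<dots> = complex_of_real (LINT x|M. indicator S x)"
    by (rule integral_complex_of_real)
  finally show ?thesis using sets.sets_into_space[OF assms] by (simp add: Int_absorb2)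
qed

lemma sets_Collect_forall_notin:
  assumes "finite I" "\<And>i. i \<in> I \<Longrightarrow> finite (A i)"
    and "\<And>i z. i \<in> I \<Longrightarrow> {x \<in> space M. f i x = z} \<in> sets M"
  shows "{x \<in> space M. \<forall>i\<in>I. f i x \<notin> A i} \<in> sets M"
proof -
  have "{x \<in> space M. \<forall>i\<in>I. f i x \<notin> A i} = {x \<in> space M. \<forall>i\<in>I. \<forall>z\<in>A i. \<not> f i x = z}"
    by blast
  also have "\<dots> \<in> sets M"
    using assms by (intro sets.sets_Collect_finite_All sets.sets_Collect_neg) auto
  finally show ?thesis .
qed

lemma measure_squared_prod_le_sum_Bstar_m:
  fixes G :: "'x \<Rightarrow> 'l \<Rightarrow> 'z" and g :: "'l \<Rightarrow> 'z \<Rightarrow> complex" and a :: "'l \<Rightarrow> complex"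
  assumes M: "finite_measure M" and S: "S \<in> sets M" and m: "finite m"
    and finY: "\<And>l. l \<in> m \<Longrightarrow> finite (Y l)"
    and onb: "\<And>l. l \<in> m \<Longrightarrow> nu_orthonormal_basis (\<nu> l) (Y l) (B l)"
    and one: "\<And>l. l \<in> m \<Longrightarrow> (\<lambda>_. 1) \<in> B l"
    and G: "G \<in> measurable M (count_space (PiE m Y))"
    and orth: "\<And>l. l \<in> m \<Longrightarrow> nu_inner (\<nu> l) (Y l) (g l) (\<lambda>_. 1) = 0"
    and const: "\<And>x l. x \<in> S \<Longrightarrow> l \<in> m \<Longrightarrow> g l (G x l) = a l"
  shows "(measure M S * (\<Prod>l\<in>m. cmod (a l)))\<^sup>2
    \<le> (\<Prod>l\<in>m. Re (nu_inner (\<nu> l) (Y l) (g l) (g l)))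
       * (\<Sum>\<phi>\<in>Bstar_m B m. (cmod (LINT x|M. indicator S x * \<phi> (G x)))\<^sup>2)"
proof -
  define T where "T = PiE m (\<lambda>l. B l - {\<lambda>_. 1})"
  define C where "C t = (\<Prod>l\<in>m. nu_inner (\<nu> l) (Y l) (g l) (t l))" for t
  define I where "I t = (LINT x|M. indicator S x * (\<Prod>l\<in>m. t l (G x l)) :: complex)" for t
  have "integrable M (\<lambda>x. indicator S x * (\<Prod>l\<in>m. t l (G x l)))" for t :: "'l \<Rightarrow> 'z \<Rightarrow> complex"
    using integrable_indicator_mult_finite_range[OF M _ G S, of "\<lambda>y. \<Prod>l\<in>m. t l (y l)"] m finY
    by (simp add: finite_PiE)
  then have "(\<Sum>t\<in>T. C t * I t) = (LINT x|M. (\<Sum>t\<in>T. C t * (indicator S x * (\<Prod>l\<in>m. t l (G x l)))))"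
    unfolding I_def by (simp add: Bochner_Integration.integral_sum integrable_mult_right)
  also have "\<dots> = (LINT x|M. indicator S x * (\<Prod>l\<in>m. a l))"
  proof (intro Bochner_Integration.integral_cong refl)
    fix x assume "x \<in> space M"
    then have "G x \<in> PiE m Y" using measurable_space[OF G] by simp
    then have "x \<in> S \<Longrightarrow> (\<Prod>l\<in>m. a l) = (\<Sum>t\<in>T. C t * (\<Prod>l\<in>m. t l (G x l)))"
      unfolding T_def C_def using const
      by (simp add: prod_nu_orthonormal_basis_expansion[OF m onb one orth, symmetric] cong: prod.cong)
    then show "(\<Sum>t\<in>T. C t * (indicator S x * (\<Prod>l\<in>m. t l (G x l)))) = indicator S x * (\<Prod>l\<in>m. a l)"
      by (auto simp: indicator_def sum_distrib_left mult_ac)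
  qed
  also have "\<dots> = complex_of_real (measure M S) * (\<Prod>l\<in>m. a l)"
    using integral_indicator_complex[OF S] by simp
  finally have "(measure M S * (\<Prod>l\<in>m. cmod (a l)))\<^sup>2 = (cmod (\<Sum>t\<in>T. C t * I t))\<^sup>2"
    by (simp add: norm_mult prod_norm)
  also have "\<dots> \<le> (\<Sum>t\<in>T. (cmod (C t))\<^sup>2) * (\<Sum>t\<in>T. (cmod (I t))\<^sup>2)"
    by (rule norm_sum_mult_squared_le)
  also have "\<dots> = (\<Prod>l\<in>m. Re (nu_inner (\<nu> l) (Y l) (g l) (g l)))
       * (\<Sum>\<phi>\<in>Bstar_m B m. (cmod (LINT x|M. indicator S x * \<phi> (G x)))\<^sup>2)"
    unfolding T_def C_def I_def
    by (simp add: prod_nu_orthonormal_basis_parseval[OF m onb one orth] sum_Bstar_m_eq_sum_PiE[OF m finY onb])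
  finally show ?thesis .
qed

lemma measure_squared_prod_nu_set_le:
  fixes \<rho> :: "'l \<Rightarrow> 'y \<Rightarrow> 'z" and F :: "'x \<Rightarrow> 'y"
  assumes M: "finite_measure M" and S: "S \<in> sets M" and m: "finite m"
    and finY: "\<And>l. l \<in> m \<Longrightarrow> finite (Y l)"
    and onb: "\<And>l. l \<in> m \<Longrightarrow> nu_orthonormal_basis (\<nu> l) (Y l) (B l)"
    and one: "\<And>l. l \<in> m \<Longrightarrow> (\<lambda>_. 1) \<in> B l"
    and nu_sum: "\<And>l. l \<in> m \<Longrightarrow> (\<Sum>y\<in>Y l. \<nu> l y) = 1"
    and \<Omega>: "\<And>l. l \<in> m \<Longrightarrow> \<Omega> l \<subseteq> Y l"
    and \<rho>: "\<And>l u. l \<in> m \<Longrightarrow> \<rho> l u \<in> Y l"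
    and meas: "\<And>l z. l \<in> m \<Longrightarrow> {x \<in> space M. \<rho> l (F x) = z} \<in> sets M"
    and sifted: "\<And>x l. x \<in> S \<Longrightarrow> l \<in> m \<Longrightarrow> \<rho> l (F x) \<notin> \<Omega> l"
  shows "(measure M S * (\<Prod>l\<in>m. nu_set (\<nu> l) (\<Omega> l)))\<^sup>2
    \<le> (\<Prod>l\<in>m. nu_set (\<nu> l) (\<Omega> l) * (1 - nu_set (\<nu> l) (\<Omega> l)))
       * (\<Sum>\<phi>\<in>Bstar_m B m. (cmod (LINT x|M. indicator S x * \<phi> (rho_m \<rho> m (F x))))\<^sup>2)"
proof -
  have "(measure M S * (\<Prod>l\<in>m. cmod (- complex_of_real (nu_set (\<nu> l) (\<Omega> l)))))\<^sup>2
      \<le> (\<Prod>l\<in>m. Re (nu_inner (\<nu> l) (Y l) (centered_indicator (\<nu> l) (\<Omega> l))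
                                         (centered_indicator (\<nu> l) (\<Omega> l))))
        * (\<Sum>\<phi>\<in>Bstar_m B m. (cmod (LINT x|M. indicator S x * \<phi> (rho_m \<rho> m (F x))))\<^sup>2)"
    using finY onb one nu_sum \<Omega> \<rho> meas sifted
    by (intro measure_squared_prod_le_sum_Bstar_m[OF M S m] measurable_rho_m[OF m]
        nu_inner_centered_indicator_one)
       (auto simp: rho_m_def centered_indicator_def)
  moreover have "(measure M S * (\<Prod>l\<in>m. cmod (- complex_of_real (nu_set (\<nu> l) (\<Omega> l)))))\<^sup>2
      = (measure M S * (\<Prod>l\<in>m. nu_set (\<nu> l) (\<Omega> l)))\<^sup>2"
    by (simp add: power_mult_distrib abs_prod[symmetric])
  moreover have "(\<Prod>l\<in>m. Re (nu_inner (\<nu> l) (Y l) (centered_indicator (\<nu> l) (\<Omega> l))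
                                   (centered_indicator (\<nu> l) (\<Omega> l))))
      = (\<Prod>l\<in>m. nu_set (\<nu> l) (\<Omega> l) * (1 - nu_set (\<nu> l) (\<Omega> l)))"
    using finY \<Omega> nu_sum by (intro prod.cong refl) (simp add: nu_inner_centered_indicator_self)
  ultimately show ?thesis by simp
qed

lemma mult_prod_odds_le:
  fixes p :: "'l \<Rightarrow> real"
  assumes m: "finite m" and p: "\<And>l. l \<in> m \<Longrightarrow> 0 \<le> p l \<and> p l < 1" and T: "0 \<le> T"
    and le: "(s * (\<Prod>l\<in>m. p l))\<^sup>2 \<le> (\<Prod>l\<in>m. p l * (1 - p l)) * T"
  shows "s\<^sup>2 * (\<Prod>l\<in>m. p l / (1 - p l)) \<le> T"
proof (cases "\<exists>l\<in>m. p l = 0")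
  case True
  then have "(\<Prod>l\<in>m. p l / (1 - p l)) = 0" using m by (auto intro: prod_zero)
  then show ?thesis using T by simp
next
  case False
  then have pos: "0 < (\<Prod>l\<in>m. p l * (1 - p l))"
    using p by (intro prod_pos) (simp add: less_le)
  have "p l / (1 - p l) * (p l * (1 - p l)) = (p l)\<^sup>2" if "l \<in> m" for l
    using p[OF that] by (simp add: power2_eq_square)
  then have "(\<Prod>l\<in>m. p l / (1 - p l)) * (\<Prod>l\<in>m. p l * (1 - p l)) = (\<Prod>l\<in>m. p l)\<^sup>2"
    by (simp add: prod.distrib[symmetric] prod_power_distrib)
  then have "(s\<^sup>2 * (\<Prod>l\<in>m. p l / (1 - p l))) * (\<Prod>l\<in>m. p l * (1 - p l)) = (s * (\<Prod>l\<in>m. p l))\<^sup>2"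
    by (simp only: mult.assoc power_mult_distrib)
  also have "\<dots> \<le> T * (\<Prod>l\<in>m. p l * (1 - p l))"
    using le by (simp only: mult.commute)
  finally show ?thesis using pos by simp
qed

lemma ennreal_le_divide_sum_prod_odds:
  fixes p :: "'l \<Rightarrow> real" and T :: "'l set \<Rightarrow> real"
  assumes L: "finite L" "\<And>m. m \<in> L \<Longrightarrow> finite m"
    and p: "\<And>m l. m \<in> L \<Longrightarrow> l \<in> m \<Longrightarrow> 0 \<le> p l \<and> p l < 1"
    and s: "0 \<le> s" and \<Delta>: "0 \<le> \<Delta>" and T: "\<And>m. m \<in> L \<Longrightarrow> 0 \<le> T m"
    and local: "\<And>m. m \<in> L \<Longrightarrow> (s * (\<Prod>l\<in>m. p l))\<^sup>2 \<le> (\<Prod>l\<in>m. p l * (1 - p l)) * T m"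
    and total: "(\<Sum>m\<in>L. T m) \<le> \<Delta> * s"
    and H: "(\<Sum>m\<in>L. \<Prod>l\<in>m. ennreal (p l) / ennreal (1 - p l)) \<noteq> 0"
  shows "ennreal s \<le> ennreal \<Delta> / (\<Sum>m\<in>L. \<Prod>l\<in>m. ennreal (p l) / ennreal (1 - p l))"
proof -
  define Q where "Q = (\<Sum>m\<in>L. \<Prod>l\<in>m. p l / (1 - p l))"
  have odds_nonneg: "0 \<le> p l / (1 - p l)" if "m \<in> L" "l \<in> m" for m l
    using p[OF that] by simp
  have "(\<Prod>l\<in>m. ennreal (p l) / ennreal (1 - p l)) = ennreal (\<Prod>l\<in>m. p l / (1 - p l))"
    if "m \<in> L" for m
  proof -
    have "(\<Prod>l\<in>m. ennreal (p l) / ennreal (1 - p l)) = (\<Prod>l\<in>m. ennreal (p l / (1 - p l)))"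
      using p[OF that] by (intro prod.cong refl divide_ennreal) auto
    also have "\<dots> = ennreal (\<Prod>l\<in>m. p l / (1 - p l))"
      using odds_nonneg[OF that] by (rule prod_ennreal)
    finally show ?thesis .
  qed
  then have "(\<Sum>m\<in>L. \<Prod>l\<in>m. ennreal (p l) / ennreal (1 - p l)) = ennreal Q"
    unfolding Q_def using odds_nonneg by (simp add: prod_nonneg)
  with H have Q: "0 < Q" "(\<Sum>m\<in>L. \<Prod>l\<in>m. ennreal (p l) / ennreal (1 - p l)) = ennreal Q"
    unfolding Q_def using odds_nonneg by (auto simp: less_le intro!: sum_nonneg prod_nonneg)
  have "s\<^sup>2 * Q = (\<Sum>m\<in>L. s\<^sup>2 * (\<Prod>l\<in>m. p l / (1 - p l)))"
    unfolding Q_def by (simp add: sum_distrib_left)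
  also have "\<dots> \<le> (\<Sum>m\<in>L. T m)"
    using L p T local by (intro sum_mono mult_prod_odds_le) auto
  finally have "s * (s * Q) \<le> s * \<Delta>" using total by (simp add: power2_eq_square mult_ac)
  then have "s \<le> \<Delta> / Q"
    using s \<Delta> Q by (cases "s = 0") (auto simp: field_simps)
  then show ?thesis unfolding Q(2) using divide_ennreal[OF \<Delta> Q(1)] by (simp add: ennreal_leI)
qed

theorem proposition2p4:
  fixes Lam :: "'l set"
    and Yl :: "'l \<Rightarrow> 'z set"
    and \<rho> :: "'l \<Rightarrow> 'y \<Rightarrow> 'z"
    and M :: "'x measure"
    and F :: "'x \<Rightarrow> 'y"
    and \<nu> :: "'l \<Rightarrow> 'z \<Rightarrow> real"
    and B :: "'l \<Rightarrow> ('z \<Rightarrow> complex) set"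
    and Lstar :: "'l set"
    and L :: "'l set set"
    and \<Delta> :: real
    and Adm :: "real set"
    and \<Omega> :: "'l \<Rightarrow> 'z set"
  assumes surj: "\<And>l. l \<in> Lam \<Longrightarrow> \<rho> l ` UNIV = Yl l"
    and fin_Yl: "\<And>l. l \<in> Lam \<Longrightarrow> finite (Yl l)"
    and fin_meas: "emeasure M (space M) < \<infinity>"
    and meas_F: "\<And>l y. l \<in> Lam \<Longrightarrow> {x \<in> space M. \<rho> l (F x) = y} \<in> sets M"
    and nu_pos: "\<And>l y. l \<in> Lam \<Longrightarrow> y \<in> Yl l \<Longrightarrow> \<nu> l y > 0"
    and nu_sum: "\<And>l. l \<in> Lam \<Longrightarrow> (\<Sum>y\<in>Yl l. \<nu> l y) = 1"
    and onb: "\<And>l. l \<in> Lam \<Longrightarrow> nu_orthonormal_basis (\<nu> l) (Yl l) (B l)"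
    and one_in_B: "\<And>l. l \<in> Lam \<Longrightarrow> (\<lambda>_. 1) \<in> B l"
    and Lstar: "finite Lstar" "Lstar \<subseteq> Lam"
    and L: "finite L" "\<And>m. m \<in> L \<Longrightarrow> finite m \<and> m \<subseteq> Lstar"
      "\<And>l. l \<in> Lstar \<Longrightarrow> {l} \<in> L"
    and Delta: "\<Delta> \<in> Adm" "\<And>D. D \<in> Adm \<Longrightarrow> \<Delta> \<le> D"
    and Adm_def: "Adm = {D. 0 \<le> D \<and>
        (\<forall>\<alpha>. square_integrable M \<alpha> \<longrightarrow>
          (\<Sum>m\<in>L. \<Sum>\<phi>\<in>Bstar_m B m.
              (cmod (LINT x|M. \<alpha> x * \<phi> (rho_m \<rho> m (F x))))\<^sup>2)
          \<le> D * (LINT x|M. (cmod (\<alpha> x))\<^sup>2))}"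
    and Omega: "\<And>l. l \<in> Lstar \<Longrightarrow> \<Omega> l \<subseteq> Yl l"
  shows "(let H = (\<Sum>m\<in>L. \<Prod>l\<in>m.
                 ennreal (nu_set (\<nu> l) (\<Omega> l)) / ennreal (1 - nu_set (\<nu> l) (\<Omega> l)))
          in H \<noteq> 0 \<longrightarrow>
             emeasure M {x \<in> space M. \<forall>l\<in>Lstar. \<rho> l (F x) \<notin> \<Omega> l} \<le> ennreal \<Delta> / H)"
proof -
  define p where "p l = nu_set (\<nu> l) (\<Omega> l)" for l
  define S where "S = {x \<in> space M. \<forall>l\<in>Lstar. \<rho> l (F x) \<notin> \<Omega> l}"
  define T where "T m = (\<Sum>\<phi>\<in>Bstar_m B m. (cmod (LINT x|M. indicator S x * \<phi> (rho_m \<rho> m (F x))))\<^sup>2)"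
    for m
  have M: "finite_measure M" using fin_meas by (intro finite_measureI) auto
  have Lam: "l \<in> Lam" if "l \<in> Lstar" for l using Lstar(2) that by blast
  have rho_in: "\<rho> l u \<in> Yl l" if "l \<in> Lam" for l u using surj[OF that] by blast
  have S_sets: "S \<in> sets M"
    unfolding S_def using Lstar(1) Lam meas_F finite_subset[OF Omega fin_Yl]
    by (intro sets_Collect_forall_notin) auto
  have \<Delta>_nonneg: "0 \<le> \<Delta>" using Delta(1) unfolding Adm_def by blast
  have "(\<Sum>m\<in>L. T m) \<le> \<Delta> * (LINT x|M. (cmod (indicator S x))\<^sup>2)"
    using Delta(1) square_integrable_indicator[OF M S_sets] unfolding Adm_def T_def by blast
  then have total: "(\<Sum>m\<in>L. T m) \<le> \<Delta> * measure M S"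
    by (simp only: integral_norm_indicator_squared[OF M S_sets])
  \<comment> \<open>A point of S forces every \<open>p l < 1\<close>; otherwise \<open>H\<close> may be \<open>\<infinity>\<close> (\<open>ennreal\<close> division by 0).\<close>
  show ?thesis
  proof (cases "S = {}")
    case True
    then show ?thesis unfolding S_def[symmetric] by (simp add: Let_def)
  next
    case False
    then obtain x\<^sub>0 where x\<^sub>0: "x\<^sub>0 \<in> S" by blast
    have p: "0 \<le> p l \<and> p l < 1" if l: "l \<in> Lstar" for l
    proof -
      have "\<rho> l (F x\<^sub>0) \<in> Yl l - \<Omega> l" using rho_in[OF Lam[OF l]] x\<^sub>0 l unfolding S_def by blast
      then show ?thesis
        unfolding p_def using fin_Yl Omega[OF l] nu_pos nu_sum Lam[OF l] by (intro nu_set_nonneg_less_one) auto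
    qed
    have local: "(measure M S * (\<Prod>l\<in>m. p l))\<^sup>2 \<le> (\<Prod>l\<in>m. p l * (1 - p l)) * T m"
      if "m \<in> L" for m
    proof -
      from L(2)[OF that] have m: "finite m" "m \<subseteq> Lstar" by auto
      then have Omega_m: "\<Omega> l \<subseteq> Yl l" if "l \<in> m" for l using Omega that by blast
      show ?thesis
        unfolding p_def T_def using m Lam fin_Yl onb one_in_B nu_sum Omega_m rho_in meas_F
        by (intro measure_squared_prod_nu_set_le[OF M S_sets m(1), where Y = Yl]) (auto simp: S_def)
    qed
    show ?thesis
      unfolding Let_def p_def[symmetric] S_def[symmetric] finite_measure.emeasure_eq_measure[OF M]
      using L(1,2) p \<Delta>_nonneg total local
      by (intro impI ennreal_le_divide_sum_prod_odds) (auto simp: T_def intro: sum_nonneg)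
  qed
qed

end
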